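(* Every proper list system admits a fair distribution.
   Context: Let $\mathbb{N}_k := \{0,1,\ldots,k-1\}$. A list system is a triple $(S,T,\mathcal{L})$, where $S$ is a set of $n_1 := |S|$ source nodes, $T$ is a set of $n_2 := |T|$ target nodes, and $\mathcal{L}: S\times \mathbb{N}_{\Delta_1} \to S$ assigns to every source node $s\in S$ a list $L_s$ of $\Delta_1 \le n_2$ not necessarily distinct elements of $S$. For $s,s'\in S$, $l(s,s')$ denotes how many times $s'$ appears in the list $L_s$. A list system is called proper when $n_2$ divides $n_1\Delta_1$ and $\sum_{s\in S} l(s,s') = \Delta_1$ for every $s'\in S$. Let $\Delta_2 := \frac{n_1\Delta_1}{n_2}$. A fair distribution is an assignment $f: S\times\mathbb{N}_{\Delta_1}\to T$ such that: (1) $|\{f(s,i) : i\in\mathbb{N}_{\Delta_1}\}| = \Delta_1$ for every $s\in S$; (2) $|\{(s,i)\in S\times\mathbb{N}_{\Delta_1} : f(s,i)=t\}| = \Delta_2$ for every $t\in T$; (3) if $(s_1,i_1)\neq(s_2,i_2)$ and $\mathcal{L}(s_1,i_1)=\mathcal{L}(s_2,i_2)$, then $f(s_1,i_1)\neq f(s_2,i_2)$, for all $s_1,s_2\in S$ and $i_1,i_2\in\mathbb{N}_{\Delta_1}$. *)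

theory Defs
  imports Main
begin

definition list_system :: "'a set \<Rightarrow> 'b set \<Rightarrow> nat \<Rightarrow> ('a \<Rightarrow> nat \<Rightarrow> 'a) \<Rightarrow> bool" where
  "list_system S T \<Delta>1 L \<longleftrightarrow>
     finite S \<and> finite T \<and> \<Delta>1 \<le> card T \<and>
     (\<forall>s\<in>S. \<forall>i<\<Delta>1. L s i \<in> S)"

definition occ :: "nat \<Rightarrow> ('a \<Rightarrow> nat \<Rightarrow> 'a) \<Rightarrow> 'a \<Rightarrow> 'a \<Rightarrow> nat" where
  "occ \<Delta>1 L s s' = card {i. i < \<Delta>1 \<and> L s i = s'}"

definition proper_list_system :: "'a set \<Rightarrow> 'b set \<Rightarrow> nat \<Rightarrow> ('a \<Rightarrow> nat \<Rightarrow> 'a) \<Rightarrow> bool" where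
  "proper_list_system S T \<Delta>1 L \<longleftrightarrow>
     list_system S T \<Delta>1 L \<and>
     card T dvd card S * \<Delta>1 \<and>
     (\<forall>s'\<in>S. (\<Sum>s\<in>S. occ \<Delta>1 L s s') = \<Delta>1)"

definition Delta2 :: "'a set \<Rightarrow> 'b set \<Rightarrow> nat \<Rightarrow> nat" where
  "Delta2 S T \<Delta>1 = card S * \<Delta>1 div card T"

definition fair_distribution ::
  "'a set \<Rightarrow> 'b set \<Rightarrow> nat \<Rightarrow> ('a \<Rightarrow> nat \<Rightarrow> 'a) \<Rightarrow> ('a \<Rightarrow> nat \<Rightarrow> 'b) \<Rightarrow> bool" where
  "fair_distribution S T \<Delta>1 L f \<longleftrightarrow>
     (\<forall>s\<in>S. \<forall>i<\<Delta>1. f s i \<in> T) \<and>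
     (\<forall>s\<in>S. card (f s ` {..<\<Delta>1}) = \<Delta>1) \<and>
     (\<forall>t\<in>T. card {(s, i). s \<in> S \<and> i < \<Delta>1 \<and> f s i = t} = Delta2 S T \<Delta>1) \<and>
     (\<forall>s1\<in>S. \<forall>s2\<in>S. \<forall>i1<\<Delta>1. \<forall>i2<\<Delta>1.
        (s1, i1) \<noteq> (s2, i2) \<and> L s1 i1 = L s2 i2 \<longrightarrow> f s1 i1 \<noteq> f s2 i2)"

end

theory Submission
  imports Defs
begin

text \<open>Regard the slot \<open>(s, i)\<close>, \<open>i < \<Delta>1\<close>, as an edge from the source \<open>s\<close> to the
  entry \<open>L s i\<close> of its list. Pad every source with \<open>card T - \<Delta>1\<close> further slots and
  join these, in groups of \<open>card T\<close>, to \<open>D\<close> new padding vertices. Properness of the list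
  system bounds all degrees of this bipartite multigraph by \<open>card T\<close>, so by Koenig's
  theorem its edges admit a proper colouring with \<open>card T\<close> colours, read as targets.
  Properness of the colouring gives the distinctness conditions of a fair distribution.
  Every source and every padding vertex has degree exactly \<open>card T\<close> and hence sees each
  colour exactly once, so each colour lies on exactly \<open>card S - D = \<Delta>2\<close> genuine slots.\<close>

text \<open>A bipartite multigraph is given by an edge set together with the maps sending
  each edge to its left and to its right endpoint.\<close>

definition proper_edge_colouring ::
  "'e set \<Rightarrow> ('e \<Rightarrow> 'l) \<Rightarrow> ('e \<Rightarrow> 'r) \<Rightarrow> nat \<Rightarrow> ('e \<Rightarrow> nat) \<Rightarrow> bool" where
  "proper_edge_colouring E lft rgt k c \<longleftrightarrow>
     (\<forall>e\<in>E. c e < k) \<and>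
     (\<forall>e\<in>E. \<forall>e'\<in>E. e \<noteq> e' \<longrightarrow> (lft e = lft e' \<or> rgt e = rgt e') \<longrightarrow> c e \<noteq> c e')"

definition colour_free :: "'e set \<Rightarrow> ('e \<Rightarrow> 'v) \<Rightarrow> ('e \<Rightarrow> nat) \<Rightarrow> 'v \<Rightarrow> nat \<Rightarrow> bool" where
  "colour_free E p c x a \<longleftrightarrow> (\<forall>e\<in>E. p e = x \<longrightarrow> c e \<noteq> a)"

lemma proper_edge_colouring_less:
  "proper_edge_colouring E lft rgt k c \<Longrightarrow> e \<in> E \<Longrightarrow> c e < k"
  unfolding proper_edge_colouring_def by blast

lemma proper_edge_colouring_eqI:
  "proper_edge_colouring E lft rgt k c \<Longrightarrow> e \<in> E \<Longrightarrow> e' \<in> E \<Longrightarrow> c e = c e' \<Longrightarrow>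
    lft e = lft e' \<or> rgt e = rgt e' \<Longrightarrow> e = e'"
  unfolding proper_edge_colouring_def by blast

lemma proper_edge_colouring_commute:
  "proper_edge_colouring E lft rgt k c \<longleftrightarrow> proper_edge_colouring E rgt lft k c"
  unfolding proper_edge_colouring_def by blast

lemma exists_colour_free:
  assumes "finite F" "card {e\<in>F. p e = x} < k"
  shows "\<exists>a<k. colour_free F p c x a"
proof -
  have "card (c ` {e\<in>F. p e = x}) < card {..<k}"
    using card_image_le[of "{e\<in>F. p e = x}" c] assms by simp
  then have "\<not> {..<k} \<subseteq> c ` {e\<in>F. p e = x}"
    using card_mono[of "c ` {e\<in>F. p e = x}" "{..<k}"] assms(1) by auto
  then show ?thesis unfolding colour_free_def by blast
qed

lemma proper_edge_colouring_insert:
  assumes "proper_edge_colouring F lft rgt k c" "a < k"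
    and "colour_free F lft c (lft e0) a" "colour_free F rgt c (rgt e0) a"
  shows "proper_edge_colouring (insert e0 F) lft rgt k (c(e0 := a))"
  using assms unfolding proper_edge_colouring_def colour_free_def by auto

lemma proper_edge_colouring_swap:
  assumes c: "proper_edge_colouring E lft rgt k c" and "a < k" "b < k"
    and P: "\<And>e. e \<in> P \<Longrightarrow> c e = a \<or> c e = b"
    and closed: "\<And>e e'. e \<in> P \<Longrightarrow> e' \<in> E \<Longrightarrow> lft e = lft e' \<or> rgt e = rgt e' \<Longrightarrow>
      c e' = a \<or> c e' = b \<Longrightarrow> e' \<in> P"
  shows "proper_edge_colouring E lft rgt k (\<lambda>e. if e \<in> P then (if c e = a then b else a) else c e)"
    (is "proper_edge_colouring E lft rgt k ?c'")
  unfolding proper_edge_colouring_def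
proof (intro conjI ballI impI)
  fix e e' assume e: "e \<in> E" "e' \<in> E" "e \<noteq> e'" and adj: "lft e = lft e' \<or> rgt e = rgt e'"
  have ne: "c e \<noteq> c e'" using proper_edge_colouring_eqI[OF c e(1,2) _ adj] e(3) by blast
  show "?c' e \<noteq> ?c' e'"
  proof (cases "e \<in> P"; cases "e' \<in> P")
    assume "e \<in> P" "e' \<in> P"
    then show ?thesis using P[of e] P[of e'] ne by auto
  next
    assume "e \<in> P" "e' \<notin> P"
    then have "c e' \<noteq> a" "c e' \<noteq> b" using closed[of e e'] e(2) adj by blast+
    then show ?thesis using \<open>e \<in> P\<close> \<open>e' \<notin> P\<close> by auto
  next
    assume "e \<notin> P" "e' \<in> P"
    then have "c e \<noteq> a" "c e \<noteq> b" using closed[of e' e] e(1) adj by auto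
    then show ?thesis using \<open>e \<notin> P\<close> \<open>e' \<in> P\<close> by auto
  next
    assume "e \<notin> P" "e' \<notin> P"
    then show ?thesis using ne by simp
  qed
next
  fix e assume "e \<in> E"
  then show "?c' e < k" using proper_edge_colouring_less[OF c] \<open>a < k\<close> \<open>b < k\<close> by simp
qed

inductive_set kempe_chain ::
  "'e set \<Rightarrow> ('e \<Rightarrow> 'l) \<Rightarrow> ('e \<Rightarrow> 'r) \<Rightarrow> ('e \<Rightarrow> nat) \<Rightarrow> nat \<Rightarrow> nat \<Rightarrow> 'e \<Rightarrow> 'e set"
  for F lft rgt c a b e1 where
  start: "e1 \<in> kempe_chain F lft rgt c a b e1"
| left_step: "\<lbrakk>e \<in> kempe_chain F lft rgt c a b e1; c e = a; e' \<in> F; c e' = b; lft e' = lft e\<rbrakk>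
    \<Longrightarrow> e' \<in> kempe_chain F lft rgt c a b e1"
| right_step: "\<lbrakk>e \<in> kempe_chain F lft rgt c a b e1; c e = b; e' \<in> F; c e' = a; rgt e' = rgt e\<rbrakk>
    \<Longrightarrow> e' \<in> kempe_chain F lft rgt c a b e1"

lemma kempe_chain_subset:
  "e \<in> kempe_chain F lft rgt c a b e1 \<Longrightarrow> e1 \<in> F \<Longrightarrow> c e1 = a \<Longrightarrow> e \<in> F \<and> (c e = a \<or> c e = b)"
  by (induction rule: kempe_chain.induct) auto

lemma kempe_chain_cases:
  assumes "e \<in> kempe_chain F lft rgt c a b e1"
  obtains "e = e1"
  | p where "p \<in> kempe_chain F lft rgt c a b e1" "c p = a" "c e = b" "lft p = lft e"
  | p where "p \<in> kempe_chain F lft rgt c a b e1" "c p = b" "c e = a" "rgt p = rgt e"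
  using assms by (induction rule: kempe_chain.induct) (auto intro: kempe_chain.intros)

text \<open>The parity argument: the chain enters a \<open>b\<close>-edge only from an \<open>a\<close>-edge at the
  same left endpoint, so it never touches a left vertex at which \<open>a\<close> is free.\<close>

lemma kempe_chain_avoids_free_left:
  assumes "e \<in> kempe_chain F lft rgt c a b e1" "e1 \<in> F" "c e1 = a"
    and a_free: "colour_free F lft c u a"
  shows "lft e \<noteq> u"
  using assms(1)
proof (cases rule: kempe_chain_cases)
  case 1
  then show ?thesis using a_free assms(2,3) unfolding colour_free_def by blast
next
  case (2 p)
  then have "p \<in> F" using kempe_chain_subset[OF 2(1) assms(2,3)] by blast
  then show ?thesis using a_free 2 unfolding colour_free_def by auto
next
  case 3
  then have "e \<in> F" using kempe_chain_subset[OF assms(1-3)] by blast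
  then show ?thesis using a_free 3 unfolding colour_free_def by auto
qed

lemma kempe_chain_backward:
  assumes c: "proper_edge_colouring F lft rgt k c" and e1: "e1 \<in> F" "c e1 = a"
    and b_free: "colour_free F rgt c (rgt e1) b"
    and e: "e \<in> kempe_chain F lft rgt c a b e1" and e': "e' \<in> F"
    and adj: "c e = a \<and> c e' = b \<and> rgt e = rgt e' \<or> c e = b \<and> c e' = a \<and> lft e = lft e'"
  shows "e' \<in> kempe_chain F lft rgt c a b e1"
proof -
  have ab: "a \<noteq> b" using b_free e1 unfolding colour_free_def by blast
  from e show ?thesis
  proof (cases rule: kempe_chain_cases)
    case 1
    then show ?thesis using adj b_free e' e1 ab unfolding colour_free_def by auto
  next
    case (2 p)
    then have "c p = c e'" "lft p = lft e'" using adj ab by auto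
    moreover have "p \<in> F" using kempe_chain_subset[OF 2(1) e1] by simp
    ultimately have "p = e'" using proper_edge_colouring_eqI[OF c _ e'] by blast
    then show ?thesis using 2(1) by simp
  next
    case (3 p)
    then have "c p = c e'" "rgt p = rgt e'" using adj ab by auto
    moreover have "p \<in> F" using kempe_chain_subset[OF 3(1) e1] by simp
    ultimately have "p = e'" using proper_edge_colouring_eqI[OF c _ e'] by blast
    then show ?thesis using 3(1) by simp
  qed
qed

lemma kempe_chain_closed:
  assumes c: "proper_edge_colouring F lft rgt k c" and e1: "e1 \<in> F" "c e1 = a"
    and b_free: "colour_free F rgt c (rgt e1) b"
    and e: "e \<in> kempe_chain F lft rgt c a b e1" and e': "e' \<in> F" "c e' = a \<or> c e' = b"
    and adj: "lft e = lft e' \<or> rgt e = rgt e'"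
  shows "e' \<in> kempe_chain F lft rgt c a b e1"
proof (cases "e = e'")
  case False
  have "e \<in> F" "c e = a \<or> c e = b" using kempe_chain_subset[OF e e1] by auto
  moreover have "c e \<noteq> c e'"
    using proper_edge_colouring_eqI[OF c _ e'(1) _ adj] \<open>e \<in> F\<close> False by blast
  ultimately consider "c e = a" "c e' = b" | "c e = b" "c e' = a" using e'(2) by auto
  then show ?thesis
  proof cases
    case 1
    show ?thesis
    proof (cases "lft e = lft e'")
      case True
      then show ?thesis using kempe_chain.left_step[OF e 1(1) e'(1) 1(2)] by simp
    qed (use kempe_chain_backward[OF c e1 b_free e e'(1)] 1 adj in simp)
  next
    case 2
    show ?thesis
    proof (cases "rgt e = rgt e'")
      case True
      then show ?thesis using kempe_chain.right_step[OF e 2(1) e'(1) 2(2)] by simp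
    qed (use kempe_chain_backward[OF c e1 b_free e e'(1)] 2 adj in simp)
  qed
qed (use e in simp)

text \<open>Swap \<open>a\<close> and \<open>b\<close> along the Kempe chain starting at the \<open>a\<close>-edge at \<open>v\<close>.\<close>

lemma kempe_recolouring:
  assumes c: "proper_edge_colouring F lft rgt k c" and "a < k" "b < k"
    and a_free: "colour_free F lft c u a" and b_free: "colour_free F rgt c v b"
  shows "\<exists>c'. proper_edge_colouring F lft rgt k c' \<and>
    colour_free F lft c' u a \<and> colour_free F rgt c' v a"
proof (cases "colour_free F rgt c v a")
  case True
  then show ?thesis using c a_free by blast
next
  case False
  then obtain e1 where e1: "e1 \<in> F" "c e1 = a" and v: "rgt e1 = v"
    unfolding colour_free_def by blast
  have ab: "a \<noteq> b" using b_free e1 v unfolding colour_free_def by blast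
  define P where "P = kempe_chain F lft rgt c a b e1"
  define c' where "c' = (\<lambda>e. if e \<in> P then (if c e = a then b else a) else c e)"
  have P: "c e = a \<or> c e = b" if "e \<in> P" for e
    using kempe_chain_subset[OF that[unfolded P_def] e1] by auto
  have "proper_edge_colouring F lft rgt k c'"
    unfolding c'_def
  proof (rule proper_edge_colouring_swap[OF c \<open>a < k\<close> \<open>b < k\<close> P])
    show "e' \<in> P" if "e \<in> P" "e' \<in> F" "lft e = lft e' \<or> rgt e = rgt e'" "c e' = a \<or> c e' = b"
      for e e'
      using kempe_chain_closed[OF c e1 b_free[folded v]] that unfolding P_def by blast
  qed
  moreover have "colour_free F lft c' u a"
    using a_free kempe_chain_avoids_free_left[OF _ e1 a_free]
    unfolding colour_free_def c'_def P_def by auto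
  moreover have "colour_free F rgt c' v a"
    unfolding colour_free_def
  proof (intro ballI impI)
    fix e assume e: "e \<in> F" "rgt e = v"
    have "c e \<noteq> b" using b_free e unfolding colour_free_def by blast
    moreover have "e \<in> P" if "c e = a"
    proof -
      have "e = e1" using proper_edge_colouring_eqI[OF c e(1) e1(1)] that e1(2) e(2) v by simp
      then show ?thesis unfolding P_def by (simp add: kempe_chain.start)
    qed
    ultimately show "c' e \<noteq> a" unfolding c'_def using ab P by auto
  qed
  ultimately show ?thesis by blast
qed

lemma card_fibre_insert:
  assumes "finite F" "e0 \<notin> F"
  shows "card {e \<in> insert e0 F. p e = x} =
    (if p e0 = x then Suc (card {e \<in> F. p e = x}) else card {e \<in> F. p e = x})"
proof (cases "p e0 = x")
  case True
  then have "{e \<in> insert e0 F. p e = x} = insert e0 {e \<in> F. p e = x}" by auto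
  then show ?thesis using True assms by simp
next
  case False
  then have "{e \<in> insert e0 F. p e = x} = {e \<in> F. p e = x}" by auto
  then show ?thesis using False by simp
qed

theorem koenig_edge_colouring:
  assumes "finite E" "\<And>x. card {e \<in> E. lft e = x} \<le> k" "\<And>y. card {e \<in> E. rgt e = y} \<le> k"
  shows "\<exists>c. proper_edge_colouring E lft rgt k c"
  using assms
proof (induction E rule: finite_induct)
  case empty
  show ?case by (auto simp: proper_edge_colouring_def)
next
  case (insert e0 F)
  note deg = card_fibre_insert[OF insert.hyps]
  have "card {e \<in> F. lft e = x} \<le> k" "card {e \<in> F. rgt e = y} \<le> k" for x y
    using deg[of lft x] deg[of rgt y] insert.prems(1)[of x] insert.prems(2)[of y]
    by (simp_all split: if_splits)
  then obtain c where c: "proper_edge_colouring F lft rgt k c"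
    using insert.IH by blast
  have "card {e \<in> F. lft e = lft e0} < k" "card {e \<in> F. rgt e = rgt e0} < k"
    using deg[of lft "lft e0"] deg[of rgt "rgt e0"]
      insert.prems(1)[of "lft e0"] insert.prems(2)[of "rgt e0"] by simp_all
  then obtain a b where ab: "a < k" "b < k"
    and "colour_free F lft c (lft e0) a" "colour_free F rgt c (rgt e0) b"
    using exists_colour_free[OF insert.hyps(1), of lft "lft e0" k c]
      exists_colour_free[OF insert.hyps(1), of rgt "rgt e0" k c] by blast
  then obtain c' where "proper_edge_colouring F lft rgt k c'"
    and "colour_free F lft c' (lft e0) a" "colour_free F rgt c' (rgt e0) a"
    using kempe_recolouring[OF c ab] by blast
  then have "proper_edge_colouring (insert e0 F) lft rgt k (c'(e0 := a))"
    by (intro proper_edge_colouring_insert ab(1))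
  then show ?case by blast
qed

lemma card_colour_class_saturated:
  assumes c: "proper_edge_colouring E lft rgt k c" and "a < k"
    and saturated: "\<And>x. x \<in> V \<Longrightarrow> card {e \<in> E. lft e = x} = k"
  shows "card {e \<in> E. lft e \<in> V \<and> c e = a} = card V"
proof -
  have "bij_betw lft {e \<in> E. lft e \<in> V \<and> c e = a} V"
    unfolding bij_betw_def
  proof
    show "inj_on lft {e \<in> E. lft e \<in> V \<and> c e = a}"
      by (rule inj_onI, rule proper_edge_colouring_eqI[OF c]) auto
    have "x \<in> lft ` {e \<in> E. lft e \<in> V \<and> c e = a}" if x: "x \<in> V" for x
    proof -
      let ?Ex = "{e \<in> E. lft e = x}"
      have "inj_on c ?Ex"
        by (rule inj_onI, rule proper_edge_colouring_eqI[OF c]) auto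
      then have "card (c ` ?Ex) = card {..<k}"
        using saturated[OF x] by (simp add: card_image)
      moreover have "c ` ?Ex \<subseteq> {..<k}"
        using proper_edge_colouring_less[OF c] by auto
      ultimately have "c ` ?Ex = {..<k}"
        by (intro card_subset_eq) auto
      then have "a \<in> c ` ?Ex" using \<open>a < k\<close> by simp
      then obtain e where "e \<in> E" "lft e = x" "c e = a" by auto
      then show ?thesis using x by (auto intro: rev_image_eqI)
    qed
    then show "lft ` {e \<in> E. lft e \<in> V \<and> c e = a} = V" by auto
  qed
  then show ?thesis by (rule bij_betw_same_card)
qed

lemma exists_uniform_blocks:
  assumes "finite X" "card X = D * k"
  obtains g where "g ` X \<subseteq> {..<D}" "\<And>d. d < D \<Longrightarrow> card {x \<in> X. g x = d} = k"
proof -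
  have "card X = card ({..<D} \<times> {..<k})"
    using assms(2) by (simp add: card_cartesian_product)
  then obtain \<phi> where \<phi>: "bij_betw \<phi> X ({..<D} \<times> {..<k})"
    using finite_same_card_bij[OF assms(1), of "{..<D} \<times> {..<k}"] by auto
  have "(\<lambda>x. fst (\<phi> x)) ` X \<subseteq> {..<D}"
    using bij_betw_apply[OF \<phi>] by (simp add: image_subset_iff mem_Times_iff)
  moreover have "card {x \<in> X. fst (\<phi> x) = d} = k" if "d < D" for d
  proof -
    have "\<phi> ` {x \<in> X. fst (\<phi> x) = d} = {p \<in> \<phi> ` X. fst p = d}"
      by blast
    also have "\<dots> = {d} \<times> {..<k}"
      using bij_betw_imp_surj_on[OF \<phi>] \<open>d < D\<close> by auto
    finally have "\<phi> ` {x \<in> X. fst (\<phi> x) = d} = {d} \<times> {..<k}" .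
    then have "bij_betw \<phi> {x \<in> X. fst (\<phi> x) = d} ({d} \<times> {..<k})"
      using bij_betw_subset[OF \<phi>, of "{x \<in> X. fst (\<phi> x) = d}"] by simp
    then show ?thesis by (simp add: bij_betw_same_card card_cartesian_product)
  qed
  ultimately show ?thesis by (rule that)
qed

lemma card_fst_fibre_Times:
  "card {e \<in> S \<times> {..<k}. fst e = x} = (if x \<in> S then k else 0)"
proof -
  have "{e \<in> S \<times> {..<k}. fst e = x} = (if x \<in> S then {x} \<times> {..<k} else {})" by auto
  then show ?thesis by (simp add: card_cartesian_product)
qed

definition padded_target :: "nat \<Rightarrow> ('a \<Rightarrow> nat \<Rightarrow> 'a) \<Rightarrow> ('a \<times> nat \<Rightarrow> nat) \<Rightarrow> 'a \<times> nat \<Rightarrow> 'a + nat" where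
  "padded_target \<Delta>1 L g e = (if snd e < \<Delta>1 then Inl (L (fst e) (snd e)) else Inr (g e))"

lemma padded_target_fibre_Inl:
  "\<Delta>1 \<le> k \<Longrightarrow>
    {e \<in> S \<times> {..<k}. padded_target \<Delta>1 L g e = Inl y} = (SIGMA s:S. {i. i < \<Delta>1 \<and> L s i = y})"
  by (auto simp: padded_target_def split: if_splits)

lemma padded_target_fibre_Inr:
  "{e \<in> S \<times> {..<k}. padded_target \<Delta>1 L g e = Inr d} = {x \<in> S \<times> {\<Delta>1..<k}. g x = d}"
  by (auto simp: padded_target_def split: if_splits)

lemma padded_target_degree:
  assumes "proper_list_system S T \<Delta>1 L"
    and g: "g ` (S \<times> {\<Delta>1..<card T}) \<subseteq> {..<D}"
      "\<And>d. d < D \<Longrightarrow> card {x \<in> S \<times> {\<Delta>1..<card T}. g x = d} = card T"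
  shows "card {e \<in> S \<times> {..<card T}. padded_target \<Delta>1 L g e = y} \<le> card T"
proof (cases y)
  case (Inl y')
  from assms(1) have "finite S" "\<Delta>1 \<le> card T" and into: "\<forall>s\<in>S. \<forall>i<\<Delta>1. L s i \<in> S"
    and regular: "\<forall>s'\<in>S. (\<Sum>s\<in>S. occ \<Delta>1 L s s') = \<Delta>1"
    unfolding proper_list_system_def list_system_def by auto
  have "card {e \<in> S \<times> {..<card T}. padded_target \<Delta>1 L g e = y} = (\<Sum>s\<in>S. occ \<Delta>1 L s y')"
    unfolding Inl padded_target_fibre_Inl[OF \<open>\<Delta>1 \<le> card T\<close>] occ_def
    using \<open>finite S\<close> by simp
  also have "\<dots> \<le> \<Delta>1"
  proof (cases "y' \<in> S")
    case False
    then have "occ \<Delta>1 L s y' = 0" if "s \<in> S" for s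
      using into that unfolding occ_def by auto
    then show ?thesis by simp
  qed (use regular in simp)
  finally show ?thesis using \<open>\<Delta>1 \<le> card T\<close> by linarith
next
  case (Inr d)
  show ?thesis
  proof (cases "d < D")
    case False
    then have no_edges: "{x \<in> S \<times> {\<Delta>1..<card T}. g x = d} = {}" using g(1) by fastforce
    show ?thesis unfolding Inr padded_target_fibre_Inr no_edges by simp
  qed (simp add: Inr padded_target_fibre_Inr g(2))
qed

lemma padded_colouring_distinct:
  assumes c: "proper_edge_colouring (S \<times> {..<k}) fst (padded_target \<Delta>1 L g) k c" and "\<Delta>1 \<le> k"
    and "s1 \<in> S" "s2 \<in> S" "i1 < \<Delta>1" "i2 < \<Delta>1" "(s1, i1) \<noteq> (s2, i2)"
    and "s1 = s2 \<or> L s1 i1 = L s2 i2"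
  shows "c (s1, i1) \<noteq> c (s2, i2)"
proof -
  have "fst (s1, i1) = fst (s2, i2) \<or> padded_target \<Delta>1 L g (s1, i1) = padded_target \<Delta>1 L g (s2, i2)"
    using assms(5,6,8) by (auto simp: padded_target_def)
  moreover have "(s1, i1) \<in> S \<times> {..<k}" "(s2, i2) \<in> S \<times> {..<k}"
    using assms(2-6) by auto
  ultimately show ?thesis
    using proper_edge_colouring_eqI[OF c] assms(7) by blast
qed

lemma card_padded_colour_class:
  assumes "finite S" "\<Delta>1 \<le> k" and D: "D * k = card S * (k - \<Delta>1)"
    and g: "g ` (S \<times> {\<Delta>1..<k}) \<subseteq> {..<D}" "\<And>d. d < D \<Longrightarrow> card {x \<in> S \<times> {\<Delta>1..<k}. g x = d} = k"
    and c: "proper_edge_colouring (S \<times> {..<k}) fst (padded_target \<Delta>1 L g) k c" and "a < k"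
  shows "card {e \<in> S \<times> {..<\<Delta>1}. c e = a} * k = card S * \<Delta>1"
proof -
  let ?E = "S \<times> {..<k}" and ?X = "S \<times> {\<Delta>1..<k}" and ?rgt = "padded_target \<Delta>1 L g"
  have "card {e \<in> ?E. fst e \<in> S \<and> c e = a} = card S"
    by (rule card_colour_class_saturated[OF c \<open>a < k\<close>]) (simp add: card_fst_fibre_Times)
  moreover have "{e \<in> ?E. fst e \<in> S \<and> c e = a} = {e \<in> ?E. c e = a}" by auto
  ultimately have all: "card {e \<in> ?E. c e = a} = card S" by simp
  have "card {e \<in> ?E. ?rgt e \<in> Inr ` {..<D} \<and> c e = a} = card (Inr ` {..<D} :: ('a + nat) set)"
    using proper_edge_colouring_commute[THEN iffD1, OF c]
    by (rule card_colour_class_saturated[OF _ \<open>a < k\<close>])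
      (use g(2) in \<open>auto simp: padded_target_fibre_Inr\<close>)
  moreover have "{e \<in> ?E. ?rgt e \<in> Inr ` {..<D} \<and> c e = a} = {e \<in> ?X. c e = a}"
    using g(1) \<open>\<Delta>1 \<le> k\<close> by (force simp: padded_target_def)
  ultimately have padding: "card {e \<in> ?X. c e = a} = D"
    by (simp add: card_image)
  have "{e \<in> S \<times> {..<\<Delta>1}. c e = a} = {e \<in> ?E. c e = a} - {e \<in> ?X. c e = a}"
    using \<open>\<Delta>1 \<le> k\<close> by auto
  moreover have "{e \<in> ?X. c e = a} \<subseteq> {e \<in> ?E. c e = a}" by auto
  ultimately have "card {e \<in> S \<times> {..<\<Delta>1}. c e = a} = card S - D"
    using all padding \<open>finite S\<close> by (simp add: card_Diff_subset)
  then show ?thesis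
    using D \<open>\<Delta>1 \<le> k\<close> by (simp add: diff_mult_distrib diff_mult_distrib2)
qed

lemma fair_distribution_of_padded_colouring:
  assumes proper: "proper_list_system S T \<Delta>1 L"
    and D: "D * card T = card S * (card T - \<Delta>1)"
    and g: "g ` (S \<times> {\<Delta>1..<card T}) \<subseteq> {..<D}"
      "\<And>d. d < D \<Longrightarrow> card {x \<in> S \<times> {\<Delta>1..<card T}. g x = d} = card T"
    and c: "proper_edge_colouring (S \<times> {..<card T}) fst (padded_target \<Delta>1 L g) (card T) c"
    and \<tau>: "bij_betw \<tau> {..<card T} T"
  shows "fair_distribution S T \<Delta>1 L (\<lambda>s i. \<tau> (c (s, i)))"
proof -
  let ?k = "card T" and ?f = "\<lambda>s i. \<tau> (c (s, i))"
  from proper have "finite S" "\<Delta>1 \<le> ?k"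
    unfolding proper_list_system_def list_system_def by auto
  have c_less: "c (s, i) < ?k" if "s \<in> S" "i < \<Delta>1" for s i
    using proper_edge_colouring_less[OF c] that \<open>\<Delta>1 \<le> ?k\<close> by simp
  have \<tau>_eq: "\<tau> x = \<tau> y \<longleftrightarrow> x = y" if "x < ?k" "y < ?k" for x y
    using bij_betw_imp_inj_on[OF \<tau>] that by (auto simp: inj_on_def)
  have distinct: "?f s1 i1 \<noteq> ?f s2 i2"
    if "s1 \<in> S" "s2 \<in> S" "i1 < \<Delta>1" "i2 < \<Delta>1" "(s1, i1) \<noteq> (s2, i2)"
      "s1 = s2 \<or> L s1 i1 = L s2 i2" for s1 s2 i1 i2
    using padded_colouring_distinct[OF c \<open>\<Delta>1 \<le> ?k\<close> that] \<tau>_eq c_less that(1-4) by simp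
  have row: "card (?f s ` {..<\<Delta>1}) = \<Delta>1" if "s \<in> S" for s
  proof -
    have "inj_on (?f s) {..<\<Delta>1}"
      by (rule inj_onI) (use distinct[of s s] that in auto)
    then show ?thesis by (simp add: card_image)
  qed
  have load: "card {(s, i). s \<in> S \<and> i < \<Delta>1 \<and> ?f s i = t} = Delta2 S T \<Delta>1" if "t \<in> T" for t
  proof -
    obtain a where a: "a < ?k" "\<tau> a = t"
      using bij_betw_imp_surj_on[OF \<tau>] \<open>t \<in> T\<close> by (metis imageE lessThan_iff)
    have "{(s, i). s \<in> S \<and> i < \<Delta>1 \<and> ?f s i = t} = {e \<in> S \<times> {..<\<Delta>1}. c e = a}"
      using a \<tau>_eq c_less by fastforce
    moreover have class_size: "card S * \<Delta>1 = card {e \<in> S \<times> {..<\<Delta>1}. c e = a} * ?k"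
      using card_padded_colour_class[OF \<open>finite S\<close> \<open>\<Delta>1 \<le> ?k\<close> D g c \<open>a < ?k\<close>] by simp
    ultimately show ?thesis
      unfolding Delta2_def class_size using a(1) by simp
  qed
  show ?thesis
    unfolding fair_distribution_def
    using bij_betw_apply[OF \<tau>] c_less distinct row load by auto
qed

theorem theorem1:
  fixes S :: "'a set" and T :: "'b set" and \<Delta>1 :: nat and L :: "'a \<Rightarrow> nat \<Rightarrow> 'a"
  assumes "proper_list_system S T \<Delta>1 L"
  shows "\<exists>f. fair_distribution S T \<Delta>1 L f"
proof -
  let ?k = "card T" and ?X = "S \<times> {\<Delta>1..<card T}"
  from assms have "finite S" "finite T" "\<Delta>1 \<le> ?k" "?k dvd card S * \<Delta>1"
    unfolding proper_list_system_def list_system_def by auto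
  then have "?k dvd card S * (?k - \<Delta>1)"
    by (simp add: diff_mult_distrib2 dvd_diff_nat)
  then obtain D where D: "D * ?k = card S * (?k - \<Delta>1)"
    using dvd_div_mult_self by blast
  then have "card ?X = D * ?k"
    by (simp add: card_cartesian_product)
  then obtain g where g: "g ` ?X \<subseteq> {..<D}" "\<And>d. d < D \<Longrightarrow> card {x \<in> ?X. g x = d} = ?k"
    using exists_uniform_blocks[of ?X] \<open>finite S\<close> by auto
  have "\<exists>c. proper_edge_colouring (S \<times> {..<?k}) fst (padded_target \<Delta>1 L g) ?k c"
    by (rule koenig_edge_colouring)
      (use \<open>finite S\<close> padded_target_degree[OF assms g] in \<open>simp_all add: card_fst_fibre_Times\<close>)
  then obtain c where c: "proper_edge_colouring (S \<times> {..<?k}) fst (padded_target \<Delta>1 L g) ?k c" ..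
  obtain \<tau> where \<tau>: "bij_betw \<tau> {..<?k} T"
    using finite_same_card_bij[of "{..<?k}" T] \<open>finite T\<close> by auto
  show ?thesis
    using fair_distribution_of_padded_colouring[OF assms D g c \<tau>] by blast
qed

end
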